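(* Let $d,n\in\mathbb{N}$ and $N=\binom{n+d-1}{n}$. (I) If the matrix $(v_1,\dots,v_N)\in\mathbb{R}^{d\times N}$ is random with a density with respect to Lebesgue measure on $\mathbb{R}^{d\times N}$ (in particular such $v_i$ exist), then almost surely the following holds: for every polynomial $p\in\mathbb{R}[x_1,\dots,x_d]$ of degree $n$ (order $n$), $p\equiv0$ if and only if $p(\lambda v_i)=0$ for all $\lambda\in\mathbb{R}$ and all $i=1,\dots,N$. (II) The number $N$ is optimal: for any $M<N$ and any $v_1,\dots,v_M\in\mathbb{R}^d$ there exists a non-zero polynomial $p\in\mathbb{R}[x_1,\dots,x_d]$ of degree $n$ such that $p(\lambda v_i)=0$ for all $\lambda\in\mathbb{R}$ and all $i=1,\dots,M$. *)

theory Defs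
  imports "HOL-Probability.Probability"
begin

text \<open>Real polynomials in the d variables x_0, ..., x_(d-1) of degree at most n are
  represented by their coefficient functions on exponent vectors (multi-indices).\<close>

definition monoms :: "nat \<Rightarrow> nat \<Rightarrow> (nat \<Rightarrow> nat) set" where
  "monoms d n = {\<alpha>. (\<forall>i. d \<le> i \<longrightarrow> \<alpha> i = 0) \<and> (\<Sum>i<d. \<alpha> i) \<le> n}"

definition polys :: "nat \<Rightarrow> nat \<Rightarrow> ((nat \<Rightarrow> nat) \<Rightarrow> real) set" where
  "polys d n = {c. \<forall>\<alpha>. \<alpha> \<notin> monoms d n \<longrightarrow> c \<alpha> = 0}"

definition peval :: "nat \<Rightarrow> nat \<Rightarrow> ((nat \<Rightarrow> nat) \<Rightarrow> real) \<Rightarrow> (nat \<Rightarrow> real) \<Rightarrow> real" where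
  "peval d n c x = (\<Sum>\<alpha>\<in>monoms d n. c \<alpha> * (\<Prod>i<d. x i ^ \<alpha> i))"

end

theory Submission
  imports Defs "Jordan_Normal_Form.Determinant"
begin

text \<open>A polynomial of degree at most n vanishes on the line through v iff each of its
  homogeneous components vanishes at v. The homogeneous polynomials of degree k form a space
  of dimension N_k = (k + d - 1) choose k, and N_k \<le> N for k \<le> n. The degree-k component
  is forced to vanish by the first N_k points as soon as the matrix of the degree-k monomials
  evaluated at these points is nonsingular. Its determinant is a polynomial in the coordinates
  of the points which is not identically zero, because distinct monomials are linearly
  independent functions; so it vanishes only on a Lebesgue null set, which a random matrix
  with a density avoids almost surely. Conversely, fewer than N points impose fewer than N
  linear conditions on the N-dimensional space of homogeneous polynomials of degree n, so a
  nonzero one vanishes at all of them, and hence on the lines through them.\<close>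

section \<open>Homogeneous multi-indices\<close>

definition hmonoms :: "nat \<Rightarrow> nat \<Rightarrow> (nat \<Rightarrow> nat) set" where
  "hmonoms d k = {\<alpha>. (\<forall>i. d \<le> i \<longrightarrow> \<alpha> i = 0) \<and> (\<Sum>i<d. \<alpha> i) = k}"

lemma finite_support_hmonoms: "\<alpha> \<in> hmonoms d k \<Longrightarrow> finite {i. 0 < \<alpha> i}"
  by (rule finite_subset[of _ "{..<d}"]) (auto simp: hmonoms_def intro: ccontr)

lemma bij_betw_count_hmonoms: "bij_betw count (multisets_of_size {..<d} k) (hmonoms d k)"
proof (rule bij_betwI[where g = Abs_multiset])
  show "count \<in> multisets_of_size {..<d} k \<rightarrow> hmonoms d k"
  proof
    fix X assume "X \<in> multisets_of_size {..<d} k"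
    then have X: "set_mset X \<subseteq> {..<d}" "size X = k" by (auto simp: multisets_of_size_def)
    then have "(\<Sum>i<d. count X i) = size X"
      by (subst size_multiset_overloaded_eq)
        (auto intro!: sum.mono_neutral_right simp: count_eq_zero_iff)
    then show "count X \<in> hmonoms d k"
      using X by (auto simp: hmonoms_def count_eq_zero_iff)
  qed
next
  show "Abs_multiset \<in> hmonoms d k \<rightarrow> multisets_of_size {..<d} k"
  proof
    fix \<alpha> assume \<alpha>: "\<alpha> \<in> hmonoms d k"
    then have count: "count (Abs_multiset \<alpha>) = \<alpha>"
      by (simp add: finite_support_hmonoms)
    have set: "set_mset (Abs_multiset \<alpha>) \<subseteq> {..<d}"
      using \<alpha> by (auto simp: set_mset_def count hmonoms_def intro: ccontr)
    then have "size (Abs_multiset \<alpha>) = (\<Sum>i<d. \<alpha> i)"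
      by (subst size_multiset_overloaded_eq)
        (auto intro!: sum.mono_neutral_left simp: not_in_iff count)
    then show "Abs_multiset \<alpha> \<in> multisets_of_size {..<d} k"
      using set \<alpha> by (auto simp: multisets_of_size_def hmonoms_def)
  qed
qed (simp_all add: finite_support_hmonoms)

lemma finite_hmonoms: "finite (hmonoms d k)"
  using bij_betw_finite[OF bij_betw_count_hmonoms] by auto

lemma card_hmonoms: "card (hmonoms d k) = (k + d - 1) choose k"
  using bij_betw_same_card[OF bij_betw_count_hmonoms] card_multisets_of_size[of "{..<d}" k]
  by (simp add: add.commute)

lemma card_hmonoms_mono:
  assumes "1 \<le> d" and "k \<le> n"
  shows "card (hmonoms d k) \<le> card (hmonoms d n)"
proof -
  have "card (hmonoms d j) = (j + d - 1) choose (d - 1)" for j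
    using assms(1) binomial_symmetric[of j "j + d - 1"] by (simp add: card_hmonoms)
  then show ?thesis
    using assms(2) by (simp add: binomial_right_mono)
qed

lemma monoms_eq_UN_hmonoms: "monoms d n = (\<Union>k\<le>n. hmonoms d k)"
  by (auto simp: monoms_def hmonoms_def)

lemma inj_on_restrict_hmonoms: "inj_on (\<lambda>\<alpha>. restrict \<alpha> {..<d}) (hmonoms d k)"
proof (rule inj_onI)
  fix \<alpha> \<beta>
  assume \<alpha>: "\<alpha> \<in> hmonoms d k" and \<beta>: "\<beta> \<in> hmonoms d k"
    and eq: "restrict \<alpha> {..<d} = restrict \<beta> {..<d}"
  show "\<alpha> = \<beta>"
  proof
    fix i
    show "\<alpha> i = \<beta> i"
    proof (cases "i < d")
      case True
      then show ?thesis using eq by (metis lessThan_iff restrict_apply')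
    next
      case False
      then show ?thesis using \<alpha> \<beta> by (simp add: hmonoms_def)
    qed
  qed
qed

definition hmonoms_enum :: "nat \<Rightarrow> nat \<Rightarrow> nat \<Rightarrow> (nat \<Rightarrow> nat)" where
  "hmonoms_enum d k = (SOME h. bij_betw h {..<card (hmonoms d k)} (hmonoms d k))"

lemma bij_betw_hmonoms_enum:
  "bij_betw (hmonoms_enum d k) {..<card (hmonoms d k)} (hmonoms d k)"
proof -
  have "\<exists>h. bij_betw h {..<card (hmonoms d k)} (hmonoms d k)"
    using ex_bij_betw_nat_finite[OF finite_hmonoms] by (simp add: atLeast0LessThan)
  then show ?thesis
    unfolding hmonoms_enum_def by (rule someI_ex)
qed

section \<open>Monomials and the homogeneous components of a polynomial\<close>

definition monomial :: "nat \<Rightarrow> (nat \<Rightarrow> nat) \<Rightarrow> (nat \<Rightarrow> real) \<Rightarrow> real" where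
  "monomial d \<alpha> x = (\<Prod>l<d. x l ^ \<alpha> l)"

lemma monomial_cong: "(\<And>l. l < d \<Longrightarrow> x l = y l) \<Longrightarrow> monomial d \<alpha> x = monomial d \<alpha> y"
  by (simp add: monomial_def)

lemma monomial_Suc: "monomial (Suc d) \<alpha> x = monomial d \<alpha> x * x d ^ \<alpha> d"
  by (simp add: monomial_def)

lemma monomial_scale: "monomial d \<alpha> (\<lambda>l. t * x l) = t ^ (\<Sum>l<d. \<alpha> l) * monomial d \<alpha> x"
  by (simp add: monomial_def power_mult_distrib prod.distrib power_sum)

lemma peval_eq_sum_hmonoms: "peval d n c x = (\<Sum>k\<le>n. \<Sum>\<alpha>\<in>hmonoms d k. c \<alpha> * monomial d \<alpha> x)"
  unfolding peval_def monoms_eq_UN_hmonoms monomial_def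
proof (rule sum.UNION_disjoint)
  show "\<forall>k\<in>{..n}. \<forall>j\<in>{..n}. k \<noteq> j \<longrightarrow> hmonoms d k \<inter> hmonoms d j = {}"
    by (auto simp: hmonoms_def)
qed (simp_all add: finite_hmonoms)

lemma peval_line:
  "peval d n c (\<lambda>l. t * x l) = (\<Sum>k\<le>n. (\<Sum>\<alpha>\<in>hmonoms d k. c \<alpha> * monomial d \<alpha> x) * t ^ k)"
  unfolding peval_eq_sum_hmonoms
  by (auto simp: monomial_scale hmonoms_def sum_distrib_right intro!: sum.cong)

lemma peval_vanishes_on_line_iff:
  "(\<forall>t. peval d n c (\<lambda>l. t * x l) = 0) \<longleftrightarrow>
     (\<forall>k\<le>n. (\<Sum>\<alpha>\<in>hmonoms d k. c \<alpha> * monomial d \<alpha> x) = 0)"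
  unfolding peval_line by (rule polyfun_eq_0)

text \<open>Stated for an injective family of multi-indices rather than a set of them, so that
  the induction on d can split the family by the exponent of the last variable without
  reindexing.\<close>

lemma monomials_independent:
  fixes c :: "'r \<Rightarrow> real" and \<beta> :: "'r \<Rightarrow> nat \<Rightarrow> nat"
  assumes "finite R" and "inj_on (\<lambda>r. restrict (\<beta> r) {..<d}) R"
    and "\<And>x. (\<Sum>r\<in>R. c r * monomial d (\<beta> r) x) = 0"
  shows "\<forall>r\<in>R. c r = 0"
  using assms
proof (induction d arbitrary: R)
  case 0
  show ?case
  proof
    fix r
    assume "r \<in> R"
    then have "R = {r}"
      using "0.prems"(2) by (auto simp: inj_on_def)
    then show "c r = 0"
      using "0.prems"(3)[of undefined] by (simp add: monomial_def)
  qed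
next
  case (Suc d)
  define R_e where "R_e e = {r \<in> R. \<beta> r d = e}" for e
  define K where "K = Max (insert 0 ((\<lambda>r. \<beta> r d) ` R))"
  have sum_R_e: "(\<Sum>r\<in>R_e e. c r * monomial d (\<beta> r) y) = 0" for e y
  proof (cases "e \<le> K")
    case False
    then have "R_e e = {}"
      using Suc.prems(1) by (auto simp: R_e_def K_def)
    then show ?thesis by simp
  next
    case True
    have upd: "monomial (Suc d) (\<beta> r) (y(d := t)) = monomial d (\<beta> r) y * t ^ \<beta> r d" for r t
      using monomial_cong[of d "y(d := t)" y] by (simp add: monomial_Suc)
    have "\<forall>t. (\<Sum>e\<le>K. (\<Sum>r\<in>R_e e. c r * monomial d (\<beta> r) y) * t ^ e) = 0"
    proof
      fix t
      have "(\<Sum>e\<le>K. (\<Sum>r\<in>R_e e. c r * monomial d (\<beta> r) y) * t ^ e) =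
          (\<Sum>e\<le>K. \<Sum>r\<in>R_e e. c r * monomial (Suc d) (\<beta> r) (y(d := t)))"
        unfolding sum_distrib_right upd
        by (intro sum.cong refl) (simp add: R_e_def mult.assoc)
      also have "\<dots> = (\<Sum>r\<in>R. c r * monomial (Suc d) (\<beta> r) (y(d := t)))"
        unfolding R_e_def by (rule sum.group) (use Suc.prems(1) in \<open>auto simp: K_def\<close>)
      also have "\<dots> = 0"
        by (rule Suc.prems(3))
      finally show "(\<Sum>e\<le>K. (\<Sum>r\<in>R_e e. c r * monomial d (\<beta> r) y) * t ^ e) = 0" .
    qed
    then show ?thesis
      using True by (simp add: polyfun_eq_0)
  qed
  have inj_R_e: "inj_on (\<lambda>r. restrict (\<beta> r) {..<d}) (R_e e)" for e
  proof (rule inj_onI)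
    fix r s
    assume r: "r \<in> R_e e" and s: "s \<in> R_e e"
      and eq: "restrict (\<beta> r) {..<d} = restrict (\<beta> s) {..<d}"
    have "restrict (\<beta> r) {..<Suc d} = restrict (\<beta> s) {..<Suc d}"
    proof
      fix i
      show "restrict (\<beta> r) {..<Suc d} i = restrict (\<beta> s) {..<Suc d} i"
        using r s fun_cong[OF eq, of i] by (cases "i = d") (auto simp: R_e_def less_Suc_eq)
    qed
    moreover have "r \<in> R" and "s \<in> R"
      using r s by (auto simp: R_e_def)
    ultimately show "r = s"
      by (rule inj_onD[OF Suc.prems(2)])
  qed
  have "\<forall>r\<in>R_e e. c r = 0" for e
    using Suc.prems(1) by (intro Suc.IH inj_R_e sum_R_e) (simp add: R_e_def)
  then show ?case by (auto simp: R_e_def)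
qed

section \<open>Determinants and linear systems\<close>

lemma det_mat_eq_0_iff:
  fixes a :: "nat \<Rightarrow> nat \<Rightarrow> 'a::idom"
  shows "det (mat n n (\<lambda>(i, j). a i j)) = 0 \<longleftrightarrow>
    (\<exists>c. (\<exists>j<n. c j \<noteq> 0) \<and> (\<forall>i<n. (\<Sum>j<n. a i j * c j) = 0))"
proof -
  have ex_vec: "(\<exists>v. v \<in> carrier_vec n \<and> P v) \<longleftrightarrow> (\<exists>c. P (vec n c))" for P :: "'a vec \<Rightarrow> bool"
  proof (rule iffI)
    assume "\<exists>v. v \<in> carrier_vec n \<and> P v"
    then obtain v where "v \<in> carrier_vec n" and "P v"
      by blast
    moreover from this(1) have "vec n (vec_index v) = v"
      by (intro eq_vecI) auto
    ultimately show "\<exists>c. P (vec n c)"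
      by metis
  next
    assume "\<exists>c. P (vec n c)"
    then show "\<exists>v. v \<in> carrier_vec n \<and> P v"
      using vec_carrier by blast
  qed
  have zero: "vec n c = 0\<^sub>v n \<longleftrightarrow> (\<forall>j<n. c j = 0)" for c :: "nat \<Rightarrow> 'a"
    by (auto simp: vec_eq_iff)
  have mult: "mat n n (\<lambda>(i, j). a i j) *\<^sub>v vec n c = vec n (\<lambda>i. \<Sum>j<n. a i j * c j)" for c
    by (rule eq_vecI) (auto simp: scalar_prod_def atLeast0LessThan intro: sum.cong)
  show ?thesis
    unfolding det_0_iff_vec_prod_zero[OF mat_carrier] ex_vec mult zero by auto
qed

lemma det_mat_eq_0_iff_rows:
  fixes a :: "nat \<Rightarrow> nat \<Rightarrow> 'a::idom"
  shows "det (mat n n (\<lambda>(i, j). a i j)) = 0 \<longleftrightarrow>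
    (\<exists>c. (\<exists>i<n. c i \<noteq> 0) \<and> (\<forall>j<n. (\<Sum>i<n. c i * a i j) = 0))"
proof -
  have "transpose_mat (mat n n (\<lambda>(i, j). a i j)) = mat n n (\<lambda>(j, i). a i j)"
    by (rule eq_matI) auto
  then have "det (mat n n (\<lambda>(i, j). a i j)) = det (mat n n (\<lambda>(j, i). a i j))"
    using det_transpose[of "mat n n (\<lambda>(i, j). a i j)" n] by simp
  then show ?thesis
    using det_mat_eq_0_iff[of n "\<lambda>j i. a i j"] by (simp add: mult.commute)
qed

lemma linear_system_nontrivial_solution:
  fixes a :: "nat \<Rightarrow> 'b \<Rightarrow> 'a::idom"
  assumes "finite S" and "m < card S"
  shows "\<exists>c. (\<forall>x. x \<notin> S \<longrightarrow> c x = 0) \<and> (\<exists>x\<in>S. c x \<noteq> 0) \<and> (\<forall>i<m. (\<Sum>x\<in>S. a i x * c x) = 0)"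
proof -
  let ?n = "card S"
  obtain h where h: "bij_betw h {..<?n} S"
    using ex_bij_betw_nat_finite[OF assms(1)] by (auto simp: atLeast0LessThan)
  define b where "b i r = (if i < m then a i (h r) else 0)" for i r
  \<comment> \<open>rows m, m + 1, ... of the padded square matrix vanish, so it is singular\<close>
  have "det (mat ?n ?n (\<lambda>(i, r). b i r)) = 0"
    unfolding det_mat_eq_0_iff_rows
    by (rule exI[of _ "\<lambda>i. if i = m then 1 else 0"])
      (use assms(2) in \<open>auto intro!: sum.neutral simp: b_def\<close>)
  then obtain c where c: "\<exists>r<?n. c r \<noteq> 0" "\<forall>i<?n. (\<Sum>r<?n. b i r * c r) = 0"
    unfolding det_mat_eq_0_iff by blast
  define c' where "c' x = (if x \<in> S then c (the_inv_into {..<?n} h x) else 0)" for x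
  have c'_h: "c' (h r) = c r" if "r < ?n" for r
    using h that by (auto simp: c'_def bij_betw_def the_inv_into_f_f)
  have sum_S: "(\<Sum>x\<in>S. g x * c' x) = (\<Sum>r<?n. g (h r) * c r)" for g :: "'b \<Rightarrow> 'a"
    using sum.reindex_bij_betw[OF h, of "\<lambda>x. g x * c' x"] c'_h by simp
  show ?thesis
  proof (intro exI[of _ c'] conjI)
    show "\<forall>x. x \<notin> S \<longrightarrow> c' x = 0" by (simp add: c'_def)
    show "\<exists>x\<in>S. c' x \<noteq> 0" using c(1) c'_h h by (metis bij_betwE lessThan_iff)
    show "\<forall>i<m. (\<Sum>x\<in>S. a i x * c' x) = 0"
    proof (intro allI impI)
      fix i
      assume "i < m"
      then have "(\<Sum>r<?n. b i r * c r) = 0"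
        using c(2) assms(2) by simp
      then show "(\<Sum>x\<in>S. a i x * c' x) = 0"
        using \<open>i < m\<close> by (simp add: sum_S b_def)
    qed
  qed
qed

definition evals_independent :: "(nat \<Rightarrow> 'x \<Rightarrow> 'a::idom) \<Rightarrow> nat \<Rightarrow> nat \<Rightarrow> (nat \<Rightarrow> 'x) \<Rightarrow> bool" where
  "evals_independent f D j p \<longleftrightarrow> (\<forall>a. (\<forall>r<D. (\<Sum>i<j. f r (p i) * a i) = 0) \<longrightarrow> (\<forall>i<j. a i = 0))"

text \<open>Some nonzero c annihilates the j evaluation vectors chosen so far; as the functions
  f r are independent, some point x has \<open>\<Sum>r<D. c r * f r x \<noteq> 0\<close>, so its evaluation vector
  is not in their span.\<close>

lemma evals_independent_extend:
  fixes f :: "nat \<Rightarrow> 'x \<Rightarrow> 'a::idom"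
  assumes f: "\<And>c. \<forall>x. (\<Sum>r<D. c r * f r x) = 0 \<Longrightarrow> \<forall>r<D. c r = 0"
    and "j < D" and p: "evals_independent f D j p"
  shows "\<exists>x. evals_independent f D (Suc j) (p(j := x))"
proof -
  obtain c where c: "\<exists>r<D. c r \<noteq> 0" "\<forall>i<j. (\<Sum>r<D. f r (p i) * c r) = 0"
    using linear_system_nontrivial_solution[of "{..<D}" j "\<lambda>i r. f r (p i)"] assms(2) by auto
  then have "\<not> (\<forall>x. (\<Sum>r<D. c r * f r x) = 0)"
    using f[of c] by blast
  then obtain x where x: "(\<Sum>r<D. c r * f r x) \<noteq> 0"
    by blast
  have "evals_independent f D (Suc j) (p(j := x))"
    unfolding evals_independent_def
  proof (rule allI, rule impI)
    fix a
    assume a: "\<forall>r<D. (\<Sum>i<Suc j. f r ((p(j := x)) i) * a i) = 0"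
    have "(\<Sum>i<j. f r ((p(j := x)) i) * a i) = (\<Sum>i<j. f r (p i) * a i)" for r
      by (rule sum.cong) auto
    then have split: "(\<Sum>i<Suc j. f r ((p(j := x)) i) * a i) = (\<Sum>i<j. f r (p i) * a i) + f r x * a j"
      for r by simp
    have "(\<Sum>r<D. c r * (\<Sum>i<j. f r (p i) * a i)) = (\<Sum>r<D. \<Sum>i<j. a i * (f r (p i) * c r))"
      by (simp add: sum_distrib_left mult_ac)
    also have "\<dots> = (\<Sum>i<j. \<Sum>r<D. a i * (f r (p i) * c r))"
      by (rule sum.swap)
    also have "\<dots> = 0"
      using c(2) by (simp add: sum_distrib_left[symmetric])
    finally have old: "(\<Sum>r<D. c r * (\<Sum>i<j. f r (p i) * a i)) = 0" .
    have "0 = (\<Sum>r<D. c r * (\<Sum>i<Suc j. f r ((p(j := x)) i) * a i))"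
      using a by simp
    also have "\<dots> = (\<Sum>r<D. c r * (\<Sum>i<j. f r (p i) * a i)) + a j * (\<Sum>r<D. c r * f r x)"
      by (simp add: split distrib_left sum.distrib sum_distrib_left mult_ac)
    also have "\<dots> = a j * (\<Sum>r<D. c r * f r x)"
      using old by simp
    finally have "a j = 0"
      using x by simp
    then have "\<forall>r<D. (\<Sum>i<j. f r (p i) * a i) = 0"
      using a by (simp add: split)
    then have "\<forall>i<j. a i = 0"
      using p unfolding evals_independent_def by blast
    with \<open>a j = 0\<close> show "\<forall>i<Suc j. a i = 0"
      by (auto simp: less_Suc_eq)
  qed
  then show ?thesis ..
qed

lemma exists_points_det_ne_0:
  fixes f :: "nat \<Rightarrow> 'x \<Rightarrow> 'a::idom"
  assumes "\<And>c. \<forall>x. (\<Sum>r<D. c r * f r x) = 0 \<Longrightarrow> \<forall>r<D. c r = 0"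
  shows "\<exists>p. det (mat D D (\<lambda>(r, i). f r (p i))) \<noteq> 0"
proof -
  have "\<exists>p. evals_independent f D j p" if "j \<le> D" for j
    using that
  proof (induction j)
    case 0
    then show ?case by (simp add: evals_independent_def)
  next
    case (Suc j)
    then have "j < D" by simp
    moreover obtain p where "evals_independent f D j p"
      using Suc by auto
    ultimately show ?case
      using evals_independent_extend[OF assms] by blast
  qed
  then obtain p where "evals_independent f D D p"
    by blast
  then have "det (mat D D (\<lambda>(r, i). f r (p i))) \<noteq> 0"
    unfolding det_mat_eq_0_iff evals_independent_def by auto
  then show ?thesis by blast
qed

section \<open>Zero sets of polynomial functions\<close>

inductive mpoly_fun :: "'i set \<Rightarrow> (('i \<Rightarrow> real) \<Rightarrow> real) \<Rightarrow> bool" for I where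
  const: "mpoly_fun I (\<lambda>x. a)"
| var: "i \<in> I \<Longrightarrow> mpoly_fun I (\<lambda>x. x i)"
| add: "mpoly_fun I f \<Longrightarrow> mpoly_fun I g \<Longrightarrow> mpoly_fun I (\<lambda>x. f x + g x)"
| mult: "mpoly_fun I f \<Longrightarrow> mpoly_fun I g \<Longrightarrow> mpoly_fun I (\<lambda>x. f x * g x)"

lemma mpoly_fun_sum:
  "finite A \<Longrightarrow> (\<And>a. a \<in> A \<Longrightarrow> mpoly_fun I (f a)) \<Longrightarrow> mpoly_fun I (\<lambda>x. \<Sum>a\<in>A. f a x)"
  by (induction A rule: finite_induct) (auto intro: mpoly_fun.intros)

lemma mpoly_fun_prod:
  "finite A \<Longrightarrow> (\<And>a. a \<in> A \<Longrightarrow> mpoly_fun I (f a)) \<Longrightarrow> mpoly_fun I (\<lambda>x. \<Prod>a\<in>A. f a x)"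
  by (induction A rule: finite_induct) (auto intro: mpoly_fun.intros)

lemma mpoly_fun_power: "mpoly_fun I f \<Longrightarrow> mpoly_fun I (\<lambda>x. f x ^ k)"
  by (induction k) (auto intro: mpoly_fun.intros)

lemma mpoly_fun_cong: "mpoly_fun I f \<Longrightarrow> (\<And>i. i \<in> I \<Longrightarrow> x i = y i) \<Longrightarrow> f x = f y"
  by (induction rule: mpoly_fun.induct) auto

lemma mpoly_fun_measurable: "mpoly_fun I f \<Longrightarrow> f \<in> borel_measurable (PiM I (\<lambda>_. lborel))"
  by (induction rule: mpoly_fun.induct) (auto intro: measurable_component_singleton)

lemma mpoly_fun_monomial:
  "(\<And>l. l < d \<Longrightarrow> g l \<in> I) \<Longrightarrow> mpoly_fun I (\<lambda>x. monomial d \<alpha> (\<lambda>l. x (g l)))"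
  unfolding monomial_def by (auto intro!: mpoly_fun_prod mpoly_fun_power mpoly_fun.var)

lemma mpoly_fun_det:
  assumes "\<And>r i. r < D \<Longrightarrow> i < D \<Longrightarrow> mpoly_fun I (a r i)"
  shows "mpoly_fun I (\<lambda>x. det (mat D D (\<lambda>(r, i). a r i x)))"
proof -
  have "det (mat D D (\<lambda>(r, i). a r i x)) =
      (\<Sum>p\<in>{p. p permutes {0..<D}}. signof p * (\<Prod>r\<in>{0..<D}. a r (p r) x))" for x
    unfolding det_def'[OF mat_carrier]
    by (intro sum.cong refl arg_cong2[where f = "(*)"] prod.cong) (auto simp: permutes_in_image)
  then show ?thesis
    by (auto intro!: mpoly_fun_sum mpoly_fun_prod mpoly_fun.mult mpoly_fun.const assms
        simp: finite_permutations permutes_in_image)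
qed

definition poly_in_var :: "'i set \<Rightarrow> 'i \<Rightarrow> (('i \<Rightarrow> real) \<Rightarrow> real) \<Rightarrow> bool" where
  "poly_in_var I j f \<longleftrightarrow> (\<exists>K q. (\<forall>k. mpoly_fun I (q k)) \<and> (\<forall>k>K. q k = (\<lambda>_. 0)) \<and>
     (\<forall>x. f x = (\<Sum>k\<le>K. q k x * x j ^ k)))"

lemma poly_in_var_if_mpoly_fun:
  fixes I :: "'i set"
  assumes "mpoly_fun I f"
  shows "poly_in_var I j f"
proof -
  let ?q = "\<lambda>k::nat. if k = 0 then f else (\<lambda>_. 0)"
  have "\<forall>k. mpoly_fun I (?q k)"
    using assms by (simp add: mpoly_fun.const)
  moreover have "\<forall>k>0. ?q k = (\<lambda>_. 0)" and "\<forall>x. f x = (\<Sum>k\<le>0. ?q k x * x j ^ k)"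
    by simp_all
  ultimately show ?thesis
    unfolding poly_in_var_def by (intro exI[of _ 0] exI[of _ ?q] conjI)
qed

lemma poly_in_var_var:
  fixes I :: "'i set"
  shows "poly_in_var I j (\<lambda>x. x j)"
proof -
  let ?q = "\<lambda>k::nat. if k = 1 then (\<lambda>_::'i \<Rightarrow> real. 1::real) else (\<lambda>_. 0)"
  have "\<forall>k. mpoly_fun I (?q k)"
    by (simp add: mpoly_fun.const)
  moreover have "\<forall>k>1. ?q k = (\<lambda>_. 0)" and "\<forall>x. x j = (\<Sum>k\<le>1. ?q k x * x j ^ k)"
    by simp_all
  ultimately show ?thesis
    unfolding poly_in_var_def by (intro exI[of _ 1] exI[of _ ?q] conjI)
qed

lemma poly_in_var_add:
  fixes I :: "'i set"
  assumes "poly_in_var I j f" and "poly_in_var I j g"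
  shows "poly_in_var I j (\<lambda>x. f x + g x)"
proof -
  obtain K1 q1 where 1: "\<forall>k. mpoly_fun I (q1 k)" "\<forall>k>K1. q1 k = (\<lambda>_. 0)"
      "\<forall>x. f x = (\<Sum>k\<le>K1. q1 k x * x j ^ k)"
    using assms(1) by (auto simp: poly_in_var_def)
  obtain K2 q2 where 2: "\<forall>k. mpoly_fun I (q2 k)" "\<forall>k>K2. q2 k = (\<lambda>_. 0)"
      "\<forall>x. g x = (\<Sum>k\<le>K2. q2 k x * x j ^ k)"
    using assms(2) by (auto simp: poly_in_var_def)
  let ?K = "max K1 K2"
  have pad: "(\<Sum>k\<le>K. q k x * x j ^ k) = (\<Sum>k\<le>?K. q k x * x j ^ k)"
    if "\<forall>k>K. q k = (\<lambda>_. 0)" and "K \<le> ?K"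
    for K and q :: "nat \<Rightarrow> ('i \<Rightarrow> real) \<Rightarrow> real" and x :: "'i \<Rightarrow> real"
    using that by (intro sum.mono_neutral_left) (auto simp: not_le)
  show ?thesis
    unfolding poly_in_var_def
  proof (intro exI[of _ ?K] exI[of _ "\<lambda>k x. q1 k x + q2 k x"] conjI allI impI)
    fix k
    show "mpoly_fun I (\<lambda>x. q1 k x + q2 k x)"
      using 1(1) 2(1) by (blast intro: mpoly_fun.add)
  next
    fix k
    assume "?K < k"
    then show "(\<lambda>x. q1 k x + q2 k x) = (\<lambda>_. 0)"
      using 1(2) 2(2) by simp
  next
    fix x
    have "f x = (\<Sum>k\<le>?K. q1 k x * x j ^ k)"
      using 1(3) pad[OF 1(2)] by simp
    moreover have "g x = (\<Sum>k\<le>?K. q2 k x * x j ^ k)"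
      using 2(3) pad[OF 2(2)] by simp
    ultimately show "f x + g x = (\<Sum>k\<le>?K. (q1 k x + q2 k x) * x j ^ k)"
      by (simp add: distrib_right sum.distrib)
  qed
qed

lemma poly_in_var_mult:
  fixes I :: "'i set"
  assumes "poly_in_var I j f" and "poly_in_var I j g"
  shows "poly_in_var I j (\<lambda>x. f x * g x)"
proof -
  obtain K1 q1 where 1: "\<forall>k. mpoly_fun I (q1 k)" "\<forall>k>K1. q1 k = (\<lambda>_. 0)"
      "\<forall>x. f x = (\<Sum>k\<le>K1. q1 k x * x j ^ k)"
    using assms(1) by (auto simp: poly_in_var_def)
  obtain K2 q2 where 2: "\<forall>k. mpoly_fun I (q2 k)" "\<forall>k>K2. q2 k = (\<lambda>_. 0)"
      "\<forall>x. g x = (\<Sum>k\<le>K2. q2 k x * x j ^ k)"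
    using assms(2) by (auto simp: poly_in_var_def)
  define q where "q r x = (\<Sum>k\<le>r. q1 k x * q2 (r - k) x)" for r x
  have "q r = (\<lambda>_. 0)" if "K1 + K2 < r" for r
  proof -
    have "q1 k x * q2 (r - k) x = 0" if "k \<le> r" for k x
    proof (cases "K1 < k")
      case True
      then show ?thesis using 1(2) by simp
    next
      case False
      then have "K2 < r - k"
        using \<open>K1 + K2 < r\<close> by linarith
      then show ?thesis using 2(2) by simp
    qed
    then show ?thesis
      unfolding q_def by (intro ext sum.neutral) auto
  qed
  moreover have "mpoly_fun I (q r)" for r
    unfolding q_def using 1(1) 2(1) by (auto intro!: mpoly_fun_sum mpoly_fun.mult)
  moreover have "f x * g x = (\<Sum>r\<le>K1 + K2. q r x * x j ^ r)" for x
    unfolding 1(3)[rule_format] 2(3)[rule_format] q_def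
    by (rule polynomial_product) (use 1(2) 2(2) in auto)
  ultimately show ?thesis
    unfolding poly_in_var_def by blast
qed

lemma poly_in_var_insert: "mpoly_fun (insert j I) f \<Longrightarrow> poly_in_var I j f"
proof (induction rule: mpoly_fun.induct)
  case (const a)
  show ?case
    by (intro poly_in_var_if_mpoly_fun mpoly_fun.const)
next
  case (var i)
  then show ?case
    by (cases "i = j") (auto intro: poly_in_var_var poly_in_var_if_mpoly_fun mpoly_fun.var)
next
  case (add f g)
  show ?case by (rule poly_in_var_add[OF add.IH])
next
  case (mult f g)
  show ?case by (rule poly_in_var_mult[OF mult.IH])
qed

lemma (in product_sigma_finite) AE_PiM_insert:
  assumes "finite I" and "j \<notin> I"
    and "{x \<in> space (PiM (insert j I) M). P x} \<in> sets (PiM (insert j I) M)"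
    and AE: "AE y in PiM I M. AE t in M j. P (y(j := t))"
  shows "AE x in PiM (insert j I) M. P x"
proof -
  let ?A = "{x \<in> space (PiM (insert j I) M). \<not> P x}"
  have A: "?A \<in> sets (PiM (insert j I) M)"
    using assms(3) by (rule sets.sets_Collect_neg)
  have "emeasure (PiM (insert j I) M) ?A = (\<integral>\<^sup>+y. (\<integral>\<^sup>+t. indicator ?A (y(j := t)) \<partial>M j) \<partial>PiM I M)"
    using product_nn_integral_insert[OF assms(1,2) borel_measurable_indicator[OF A]] A by simp
  also have "\<dots> = (\<integral>\<^sup>+y. 0 \<partial>PiM I M)"
  proof (rule nn_integral_cong_AE)
    show "AE y in PiM I M. (\<integral>\<^sup>+t. indicator ?A (y(j := t)) \<partial>M j) = 0"
      using AE
    proof eventually_elim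
      case (elim y)
      then have "AE t in M j. indicator ?A (y(j := t)) = (0::ennreal)"
        by eventually_elim (simp add: indicator_def)
      then show ?case
        using nn_integral_cong_AE by fastforce
    qed
  qed
  finally show ?thesis
    using A by (simp add: AE_iff_null null_sets_def)
qed

lemma AE_mpoly_fun_ne_0:
  fixes f :: "('i \<Rightarrow> real) \<Rightarrow> real"
  assumes "finite I" and "mpoly_fun I f" and "f x0 \<noteq> 0"
  shows "AE x in PiM I (\<lambda>_. lborel). f x \<noteq> 0"
  using assms
proof (induction I arbitrary: f x0 rule: finite_induct)
  case empty
  have "f x = f x0" for x
    by (rule mpoly_fun_cong[OF empty.prems(1)]) simp
  then show ?case
    using empty.prems(2) by (intro AE_I2) metis
next
  case (insert j I)
  interpret product_sigma_finite "\<lambda>_::'i. lborel :: real measure"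
    by (simp add: product_sigma_finite_def lborel.sigma_finite_measure_axioms)
  obtain K q where q: "\<forall>k. mpoly_fun I (q k)" "\<forall>x. f x = (\<Sum>k\<le>K. q k x * x j ^ k)"
    using poly_in_var_insert[OF insert.prems(1)] by (auto simp: poly_in_var_def)
  have "\<exists>k\<le>K. q k x0 \<noteq> 0"
  proof (rule ccontr)
    assume "\<not> (\<exists>k\<le>K. q k x0 \<noteq> 0)"
    then have "(\<Sum>k\<le>K. q k x0 * x0 j ^ k) = 0"
      by (intro sum.neutral) auto
    then show False
      using q(2) insert.prems(2) by simp
  qed
  then obtain k0 where k0: "k0 \<le> K" "q k0 x0 \<noteq> 0"
    by blast
  have "AE y in PiM I (\<lambda>_. lborel). q k0 y \<noteq> 0"
    using insert.IH q(1) k0(2) by blast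
  then have "AE y in PiM I (\<lambda>_. lborel). AE t in lborel. f (y(j := t)) \<noteq> 0"
  proof eventually_elim
    case (elim y)
    have "q k (y(j := t)) = q k y" for k t
      by (rule mpoly_fun_cong[OF q(1)[rule_format]]) (use insert.hyps(2) in auto)
    then have "f (y(j := t)) = (\<Sum>k\<le>K. q k y * t ^ k)" for t
      using q(2) by simp
    moreover have "finite {t. (\<Sum>k\<le>K. q k y * t ^ k) = 0}"
      using elim k0(1) by (rule polyfun_roots_finite)
    then have "AE t in lborel. t \<notin> {t. (\<Sum>k\<le>K. q k y * t ^ k) = 0}"
      by (intro AE_not_in finite_imp_null_set_lborel)
    ultimately show ?case
      by simp
  qed
  moreover have [measurable]: "f \<in> borel_measurable (PiM (insert j I) (\<lambda>_. lborel))"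
    using insert.prems(1) by (rule mpoly_fun_measurable)
  ultimately show ?case
    by (intro AE_PiM_insert insert.hyps) measurable
qed

section \<open>Generic points\<close>

definition hmonoms_det :: "nat \<Rightarrow> nat \<Rightarrow> (nat \<times> nat \<Rightarrow> real) \<Rightarrow> real" where
  "hmonoms_det d k V = det (mat (card (hmonoms d k)) (card (hmonoms d k))
     (\<lambda>(r, i). monomial d (hmonoms_enum d k r) (\<lambda>l. V (l, i))))"

lemma AE_hmonoms_det_ne_0:
  assumes "card (hmonoms d k) \<le> N"
  shows "AE V in PiM ({..<d} \<times> {..<N}) (\<lambda>_. lborel). hmonoms_det d k V \<noteq> 0"
proof -
  let ?h = "hmonoms_enum d k" and ?D = "card (hmonoms d k)"
  have "inj_on ((\<lambda>\<alpha>. restrict \<alpha> {..<d}) \<circ> ?h) {..<?D}"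
    using bij_betw_hmonoms_enum[of d k] inj_on_restrict_hmonoms
    by (intro comp_inj_on) (auto simp: bij_betw_def)
  then have inj: "inj_on (\<lambda>r. restrict (?h r) {..<d}) {..<?D}"
    by (simp add: comp_def)
  have "\<exists>p. det (mat ?D ?D (\<lambda>(r, i). monomial d (?h r) (p i))) \<noteq> 0"
  proof (rule exists_points_det_ne_0)
    fix c :: "nat \<Rightarrow> real"
    assume "\<forall>x. (\<Sum>r<?D. c r * monomial d (?h r) x) = 0"
    then show "\<forall>r<?D. c r = 0"
      using monomials_independent[OF finite_lessThan inj, of c] by simp
  qed
  then obtain p where "det (mat ?D ?D (\<lambda>(r, i). monomial d (?h r) (p i))) \<noteq> 0"
    by blast
  then have "hmonoms_det d k (\<lambda>(l, i). p i l) \<noteq> 0"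
    by (simp add: hmonoms_det_def)
  moreover have "mpoly_fun ({..<d} \<times> {..<N}) (hmonoms_det d k)"
    unfolding hmonoms_det_def
    by (intro mpoly_fun_det mpoly_fun_monomial) (use assms in auto)
  ultimately show ?thesis
    by (intro AE_mpoly_fun_ne_0) auto
qed

lemma vanishing_on_lines_imp_zero:
  assumes c: "c \<in> polys d n"
    and generic: "\<And>k. k \<le> n \<Longrightarrow> hmonoms_det d k V \<noteq> 0"
    and N: "\<And>k. k \<le> n \<Longrightarrow> card (hmonoms d k) \<le> N"
    and vanish: "\<forall>i<N. \<forall>t. peval d n c (\<lambda>l. t * V (l, i)) = 0"
  shows "c = (\<lambda>_. 0)"
proof
  fix \<alpha>
  show "c \<alpha> = 0"
  proof (cases "\<alpha> \<in> monoms d n")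
    case False
    with c show ?thesis by (simp add: polys_def)
  next
    case True
    then obtain k where k: "k \<le> n" "\<alpha> \<in> hmonoms d k"
      by (auto simp: monoms_eq_UN_hmonoms)
    let ?h = "hmonoms_enum d k" and ?D = "card (hmonoms d k)"
    have h: "bij_betw ?h {..<?D} (hmonoms d k)"
      by (rule bij_betw_hmonoms_enum)
    have "(\<Sum>r<?D. c (?h r) * monomial d (?h r) (\<lambda>l. V (l, i))) = 0" if "i < ?D" for i
    proof -
      have "(\<Sum>\<beta>\<in>hmonoms d k. c \<beta> * monomial d \<beta> (\<lambda>l. V (l, i))) = 0"
        using vanish N[OF k(1)] that k(1) by (simp add: peval_vanishes_on_line_iff)
      then show ?thesis
        using sum.reindex_bij_betw[OF h, of "\<lambda>\<beta>. c \<beta> * monomial d \<beta> (\<lambda>l. V (l, i))"] by simp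
    qed
    then have "\<forall>r<?D. c (?h r) = 0"
      using generic[OF k(1)] by (auto simp: hmonoms_det_def det_mat_eq_0_iff_rows)
    then show "c \<alpha> = 0"
      using h k(2) by (metis bij_betw_iff_bijections lessThan_iff)
  qed
qed

lemma AE_distributedD:
  assumes "distributed M N X f" and "AE x in N. P x"
  shows "AE \<omega> in M. P (X \<omega>)"
proof -
  have "AE x in density N f. P x"
    using assms(2) distributed_borel_measurable[OF assms(1)]
    by (auto simp: AE_density elim: eventually_mono)
  then have "AE x in distr M N X. P x"
    by (simp only: distributed_distr_eq_density[OF assms(1)])
  then show ?thesis
    by (rule AE_distrD[OF distributed_measurable[OF assms(1)]])
qed

lemma AE_vanishing_on_lines_iff_zero:
  assumes "\<And>k. k \<le> n \<Longrightarrow> card (hmonoms d k) \<le> N"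
    and "distributed M (PiM ({..<d} \<times> {..<N}) (\<lambda>_. lborel)) V f"
  shows "AE \<omega> in M. \<forall>c\<in>polys d n.
    c = (\<lambda>_. 0) \<longleftrightarrow> (\<forall>i<N. \<forall>t. peval d n c (\<lambda>l. t * V \<omega> (l, i)) = 0)"
proof -
  have "AE W in PiM ({..<d} \<times> {..<N}) (\<lambda>_. lborel). \<forall>k\<in>{..n}. hmonoms_det d k W \<noteq> 0"
    using assms(1) by (intro AE_finite_allI AE_hmonoms_det_ne_0) auto
  then have "AE \<omega> in M. \<forall>k\<in>{..n}. hmonoms_det d k (V \<omega>) \<noteq> 0"
    by (rule AE_distributedD[OF assms(2)])
  then show ?thesis
  proof eventually_elim
    case (elim \<omega>)
    show ?case
    proof (intro ballI iffI)
      fix c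
      assume "c \<in> polys d n" and "\<forall>i<N. \<forall>t. peval d n c (\<lambda>l. t * V \<omega> (l, i)) = 0"
      then show "c = (\<lambda>_. 0)"
        using elim assms(1) by (intro vanishing_on_lines_imp_zero) auto
    next
      fix c :: "(nat \<Rightarrow> nat) \<Rightarrow> real"
      assume "c = (\<lambda>_. 0)"
      then show "\<forall>i<N. \<forall>t. peval d n c (\<lambda>l. t * V \<omega> (l, i)) = 0"
        by (simp add: peval_def)
    qed
  qed
qed

lemma exists_poly_vanishing_on_lines:
  assumes "m < card (hmonoms d n)"
  shows "\<exists>c\<in>polys d n. c \<noteq> (\<lambda>_. 0) \<and> (\<forall>i<m. \<forall>t. peval d n c (\<lambda>l. t * v i l) = 0)"
proof -
  obtain c where c: "\<forall>\<alpha>. \<alpha> \<notin> hmonoms d n \<longrightarrow> c \<alpha> = 0" "\<exists>\<alpha>\<in>hmonoms d n. c \<alpha> \<noteq> 0"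
      "\<forall>i<m. (\<Sum>\<alpha>\<in>hmonoms d n. monomial d \<alpha> (v i) * c \<alpha>) = 0"
    using linear_system_nontrivial_solution[OF finite_hmonoms assms, of "\<lambda>i \<alpha>. monomial d \<alpha> (v i)"]
    by blast
  have "\<forall>t. peval d n c (\<lambda>l. t * v i l) = 0" if "i < m" for i
    unfolding peval_vanishes_on_line_iff
  proof (intro allI impI)
    fix k
    assume "k \<le> n"
    show "(\<Sum>\<alpha>\<in>hmonoms d k. c \<alpha> * monomial d \<alpha> (v i)) = 0"
    proof (cases "k = n")
      case True
      then show ?thesis
        using c(3) that by (simp add: mult.commute)
    next
      case False
      then have "c \<alpha> = 0" if "\<alpha> \<in> hmonoms d k" for \<alpha>
        using c(1) that by (auto simp: hmonoms_def)
      then show ?thesis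
        by simp
    qed
  qed
  moreover have "c \<in> polys d n"
    using c(1) by (auto simp: polys_def monoms_eq_UN_hmonoms)
  moreover have "c \<noteq> (\<lambda>_. 0)"
    using c(2) by auto
  ultimately show ?thesis
    by blast
qed

theorem theorem3p13:
  fixes d n :: nat
  assumes "1 \<le> d" and "1 \<le> n"
  defines "N \<equiv> (n + d - 1) choose n"
  shows
    "(\<forall>(M :: 'a measure) (V :: 'a \<Rightarrow> (nat \<times> nat \<Rightarrow> real)) f.
        prob_space M \<and> distributed M (PiM ({..<d} \<times> {..<N}) (\<lambda>_. lborel)) V f \<longrightarrow>
        (AE \<omega> in M. \<forall>c \<in> polys d n.
            c = (\<lambda>_. 0) \<longleftrightarrow>
            (\<forall>i<N. \<forall>t::real. peval d n c (\<lambda>k. t * V \<omega> (k, i)) = 0)))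
     \<and> (\<forall>m<N. \<forall>v :: nat \<Rightarrow> nat \<Rightarrow> real.
        \<exists>c \<in> polys d n. c \<noteq> (\<lambda>_. 0) \<and>
            (\<forall>i<m. \<forall>t::real. peval d n c (\<lambda>k. t * v i k) = 0))"
proof -
  have N: "N = card (hmonoms d n)"
    by (simp add: N_def card_hmonoms)
  have "card (hmonoms d k) \<le> N" if "k \<le> n" for k
    using card_hmonoms_mono[OF assms(1) that] by (simp add: N)
  then show ?thesis
    by (auto intro!: AE_vanishing_on_lines_iff_zero exists_poly_vanishing_on_lines simp: N)
qed

end
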